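(* Let $Q_1,Q_2\ge 1$ be integers, $\lambda_1,\lambda_2>0$, $p_{12},p_{21}\in[0,1]$, and set $s=\lambda_1+\lambda_2$, $s_1=\lambda_1+\lambda_2p_{21}$, $s_2=\lambda_2+\lambda_1p_{12}$. Let $\{(n_1(t),n_2(t)):t\ge 0\}$ be the inventory CTMC (defined in the context) started at $(n_1(0),n_2(0))=(Q_1,Q_2)$, and let $p_{(j_1,j_2)}(t)=P(n_1(t)=j_1,n_2(t)=j_2)$. Then for every $t\ge 0$: (a) for $1\le j_1\le Q_1$, $1\le j_2\le Q_2$, with $N=Q_1+Q_2-j_1-j_2$, $$p_{(j_1,j_2)}(t)=e^{-st}\frac{(st)^{N}}{N!}\binom{N}{Q_1-j_1}\Big(\frac{\lambda_1}{s}\Big)^{Q_1-j_1}\Big(\frac{\lambda_2}{s}\Big)^{Q_2-j_2};$$ (b) for $1\le j_1\le Q_1$, $$p_{(j_1,0)}(t)=\sum_{k=Q_1+Q_2-j_1}^{\infty}e^{-st}\frac{(st)^k}{k!}\sum_{l=Q_2}^{Q_1+Q_2-j_1}\binom{l-1}{Q_2-1}\Big(\frac{\lambda_2}{s}\Big)^{Q_2}\Big(\frac{\lambda_1}{s}\Big)^{l-Q_2}\binom{k-l}{Q_1+Q_2-j_1-l}\Big(\frac{s_1}{s}\Big)^{Q_1+Q_2-j_1-l}\Big(\frac{s-s_1}{s}\Big)^{k-Q_1-Q_2+j_1};$$ (c) for $1\le j_2\le Q_2$, $$p_{(0,j_2)}(t)=\sum_{k=Q_1+Q_2-j_2}^{\infty}e^{-st}\frac{(st)^k}{k!}\sum_{l=Q_1}^{Q_1+Q_2-j_2}\binom{l-1}{Q_1-1}\Big(\frac{\lambda_1}{s}\Big)^{Q_1}\Big(\frac{\lambda_2}{s}\Big)^{l-Q_1}\binom{k-l}{Q_1+Q_2-j_2-l}\Big(\frac{s_2}{s}\Big)^{Q_1+Q_2-j_2-l}\Big(\frac{s-s_2}{s}\Big)^{k-Q_1-Q_2+j_2};$$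 (d) $p_{(0,0)}(t)=1-\sum_{(j_1,j_2)\neq(0,0)}p_{(j_1,j_2)}(t)$.
   Context: Two products; customers wanting product $i$ arrive as independent Poisson processes of rate $\lambda_i$; a customer who wants product $i$ and finds it out of stock while product $j\ne i$ is in stock buys one unit of $j$ with probability $p_{ij}$ (otherwise the sale is lost). The inventory CTMC $\{(n_1(t),n_2(t))\}$ (with initial stock $(Q_1,Q_2)$, no replenishment) has state space $\{0,\dots,Q_1\}\times\{0,\dots,Q_2\}$ and transition rates: from $(i_1,i_2)$ with $i_1,i_2\ge1$, to $(i_1-1,i_2)$ at rate $\lambda_1$ and to $(i_1,i_2-1)$ at rate $\lambda_2$; from $(i_1,0)$ with $i_1\ge 1$, to $(i_1-1,0)$ at rate $s_1=\lambda_1+\lambda_2p_{21}$; from $(0,i_2)$ with $i_2\ge1$, to $(0,i_2-1)$ at rate $s_2=\lambda_2+\lambda_1p_{12}$; $(0,0)$ is absorbing. Here $s=\lambda_1+\lambda_2$. *)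

theory Defs
  imports Complex_Main
begin

definition inv_states :: "nat \<Rightarrow> nat \<Rightarrow> (nat \<times> nat) set" where
  "inv_states Q1 Q2 = {0..Q1} \<times> {0..Q2}"

definition inv_rate :: "real \<Rightarrow> real \<Rightarrow> real \<Rightarrow> real \<Rightarrow> nat \<times> nat \<Rightarrow> nat \<times> nat \<Rightarrow> real" where
  "inv_rate l1 l2 p12 p21 x y =
     (let i1 = fst x; i2 = snd x in
      if 1 \<le> i1 \<and> 1 \<le> i2 then
        (if y = (i1 - 1, i2) then l1 else if y = (i1, i2 - 1) then l2 else 0)
      else if 1 \<le> i1 \<and> i2 = 0 then
        (if y = (i1 - 1, 0) then l1 + l2 * p21 else 0)
      else if i1 = 0 \<and> 1 \<le> i2 then
        (if y = (0, i2 - 1) then l2 + l1 * p12 else 0)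
      else 0)"

definition inv_gen :: "nat \<Rightarrow> nat \<Rightarrow> real \<Rightarrow> real \<Rightarrow> real \<Rightarrow> real \<Rightarrow> nat \<times> nat \<Rightarrow> nat \<times> nat \<Rightarrow> real" where
  "inv_gen Q1 Q2 l1 l2 p12 p21 x y =
     (if x = y then - (\<Sum>z\<in>inv_states Q1 Q2 - {x}. inv_rate l1 l2 p12 p21 x z)
      else inv_rate l1 l2 p12 p21 x y)"

fun inv_gen_pow :: "nat \<Rightarrow> nat \<Rightarrow> real \<Rightarrow> real \<Rightarrow> real \<Rightarrow> real \<Rightarrow> nat \<Rightarrow> nat \<times> nat \<Rightarrow> nat \<times> nat \<Rightarrow> real" where
  "inv_gen_pow Q1 Q2 l1 l2 p12 p21 0 x y = (if x = y then 1 else 0)"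
| "inv_gen_pow Q1 Q2 l1 l2 p12 p21 (Suc n) x y =
     (\<Sum>z\<in>inv_states Q1 Q2. inv_gen_pow Q1 Q2 l1 l2 p12 p21 n x z * inv_gen Q1 Q2 l1 l2 p12 p21 z y)"

text \<open>Transition function P(t) = exp(t G) of the finite-state CTMC:
  inv_trans ... t x y = P(X(t) = y | X(0) = x).\<close>
definition inv_trans :: "nat \<Rightarrow> nat \<Rightarrow> real \<Rightarrow> real \<Rightarrow> real \<Rightarrow> real \<Rightarrow> real \<Rightarrow> nat \<times> nat \<Rightarrow> nat \<times> nat \<Rightarrow> real" where
  "inv_trans Q1 Q2 l1 l2 p12 p21 t x y =
     (\<Sum>n. t ^ n / fact n * inv_gen_pow Q1 Q2 l1 l2 p12 p21 n x y)"

end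

theory Submission
  imports Defs
begin

text \<open>Uniformization.  With \<open>s = l1 + l2\<close> and \<open>M = I + G / s\<close> one has
  \<open>exp (t G) = exp (- s t) \<Sum>k. (s t)^k / k! M^k\<close>, and \<open>M\<close> is the transition matrix of a
  discrete walk which in the interior removes a unit of product 1 or 2 with probabilities
  \<open>l1 / s\<close> and \<open>l2 / s\<close>, and on the axis \<open>i2 = 0\<close> removes a unit of product 1 with probability
  \<open>s1 / s\<close> and otherwise stays put.  Started at \<open>(Q1, Q2)\<close>, the walk is at an interior state
  after \<open>k\<close> steps only if \<open>k = N\<close>, with binomial probability; this gives (a).  It is at
  \<open>(j1, 0)\<close> if it exhausted product 2 at some step \<open>l\<close> (a negative binomial probability in
  \<open>l\<close>) and then made the remaining axis moves among the next \<open>k - l\<close> steps (a binomial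
  probability); this gives (b).  Exchanging the two products maps the chain to itself, so (c)
  follows from (b), and (d) holds because the rows of \<open>G\<close> sum to zero.\<close>

section \<open>Uniformization of a finite generator\<close>

fun mat_pow :: "'a set \<Rightarrow> ('a \<Rightarrow> 'a \<Rightarrow> real) \<Rightarrow> nat \<Rightarrow> 'a \<Rightarrow> 'a \<Rightarrow> real" where
  "mat_pow S M 0 x y = (if x = y then 1 else 0)"
| "mat_pow S M (Suc n) x y = (\<Sum>z\<in>S. mat_pow S M n x z * M z y)"

definition uniformization :: "('a \<Rightarrow> 'a \<Rightarrow> real) \<Rightarrow> real \<Rightarrow> 'a \<Rightarrow> 'a \<Rightarrow> real" where
  "uniformization G s x y = (if x = y then 1 else 0) + G x y / s"

lemma sum_choose_Suc_split:
  fixes d :: "nat \<Rightarrow> real"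
  shows "(\<Sum>k\<le>Suc n. real (Suc n choose k) * r ^ (Suc n - k) * d k)
       = (\<Sum>k\<le>n. real (n choose k) * r ^ (n - k) * d (Suc k))
         + r * (\<Sum>k\<le>n. real (n choose k) * r ^ (n - k) * d k)"
proof -
  have "(\<Sum>k\<le>Suc n. real (Suc n choose k) * r ^ (Suc n - k) * d k)
     = r ^ Suc n * d 0 + (\<Sum>k\<le>n. real (n choose k) * r ^ (n - k) * d (Suc k))
        + (\<Sum>k\<le>n. real (n choose Suc k) * r ^ (n - k) * d (Suc k))"
    by (subst sum.atMost_Suc_shift) (simp add: sum.distrib algebra_simps)
  moreover have "r * (\<Sum>k\<le>n. real (n choose k) * r ^ (n - k) * d k)
      = (\<Sum>k\<le>Suc n. real (n choose k) * r ^ (Suc n - k) * d k)"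
    by (simp add: sum_distrib_left Suc_diff_le algebra_simps)
  moreover have "\<dots> = r ^ Suc n * d 0 + (\<Sum>k\<le>n. real (n choose Suc k) * r ^ (n - k) * d (Suc k))"
    by (subst sum.atMost_Suc_shift) simp
  ultimately show ?thesis by simp
qed

text \<open>Writing \<open>G = s (M - I)\<close> with \<open>M = uniformization G s\<close>, the powers of \<open>G\<close> are
  binomial expansions in the powers of \<open>M\<close>.\<close>
lemma mat_pow_uniformization:
  assumes fin: "finite S" and y: "y \<in> S" and s: "s \<noteq> 0"
  shows "mat_pow S G n x y =
    (\<Sum>k\<le>n. real (n choose k) * (-s) ^ (n - k) * (s ^ k * mat_pow S (uniformization G s) k x y))"
  using y
proof (induction n arbitrary: y)
  case 0
  then show ?case by simp
next
  case (Suc n)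
  define u where "u k w = mat_pow S (uniformization G s) k x w" for k w
  have step: "(\<Sum>z\<in>S. u k z * G z y) = s * u (Suc k) y - s * u k y" for k
  proof -
    have "(\<Sum>z\<in>S. u k z * G z y)
        = (\<Sum>z\<in>S. s * (u k z * uniformization G s z y) - (if z = y then s * u k y else 0))"
      by (rule sum.cong) (auto simp: uniformization_def s field_simps)
    also have "\<dots> = s * u (Suc k) y - s * u k y"
      using fin Suc.prems by (simp add: sum_subtractf sum_distrib_left u_def)
    finally show ?thesis .
  qed
  have "mat_pow S G (Suc n) x y
      = (\<Sum>z\<in>S. (\<Sum>k\<le>n. real (n choose k) * (-s) ^ (n - k) * (s ^ k * u k z)) * G z y)"
    using Suc.IH by (simp add: u_def)
  also have "\<dots> = (\<Sum>k\<le>n. real (n choose k) * (-s) ^ (n - k) * s ^ k * (\<Sum>z\<in>S. u k z * G z y))"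
    by (simp add: sum_distrib_right sum_distrib_left mult.assoc sum.swap[of _ S])
  also have "\<dots> = (\<Sum>k\<le>n. real (n choose k) * (-s) ^ (n - k) * s ^ k * (s * u (Suc k) y - s * u k y))"
    by (simp only: step)
  also have "\<dots> = (\<Sum>k\<le>n. real (n choose k) * (-s) ^ (n - k) * (s ^ Suc k * u (Suc k) y))
        + (-s) * (\<Sum>k\<le>n. real (n choose k) * (-s) ^ (n - k) * (s ^ k * u k y))"
    by (simp add: sum_distrib_left sum.distrib[symmetric] algebra_simps)
  also have "\<dots> = (\<Sum>k\<le>Suc n. real (Suc n choose k) * (-s) ^ (Suc n - k) * (s ^ k * u k y))"
    by (rule sum_choose_Suc_split[symmetric])
  finally show ?case unfolding u_def .
qed

lemma abs_mat_pow_le: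
  assumes fin: "finite S" and y: "y \<in> S"
  shows "\<bar>mat_pow S M k x y\<bar> \<le> (real (card S) * (\<Sum>z\<in>S. \<Sum>w\<in>S. \<bar>M z w\<bar>)) ^ k"
  using y
proof (induction k arbitrary: y)
  case 0
  then show ?case by simp
next
  case (Suc k)
  define m where "m = (\<Sum>z\<in>S. \<Sum>w\<in>S. \<bar>M z w\<bar>)"
  have m: "\<bar>M z w\<bar> \<le> m" if "z \<in> S" "w \<in> S" for z w
  proof -
    have "\<bar>M z w\<bar> \<le> (\<Sum>w\<in>S. \<bar>M z w\<bar>)"
      using fin that by (intro member_le_sum) auto
    also have "\<dots> \<le> m"
      unfolding m_def using fin that
      by (intro member_le_sum[of z S "\<lambda>z. \<Sum>w\<in>S. \<bar>M z w\<bar>"]) (auto intro: sum_nonneg)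
    finally show ?thesis .
  qed
  have "0 \<le> m" unfolding m_def by (intro sum_nonneg) auto
  have "\<bar>mat_pow S M (Suc k) x y\<bar> \<le> (\<Sum>z\<in>S. \<bar>mat_pow S M k x z * M z y\<bar>)"
    by (simp add: sum_abs)
  also have "\<dots> \<le> (\<Sum>z\<in>S. (real (card S) * m) ^ k * m)"
    unfolding abs_mult using Suc.IH[folded m_def] m Suc.prems \<open>0 \<le> m\<close>
    by (intro sum_mono mult_mono) auto
  also have "\<dots> = (real (card S) * m) ^ Suc k" by (simp add: algebra_simps)
  finally show ?case unfolding m_def .
qed

lemma summable_norm_exp_series_mult:
  fixes f :: "nat \<Rightarrow> real"
  assumes "\<And>k. \<bar>f k\<bar> \<le> B ^ k"
  shows "summable (\<lambda>k. norm (x ^ k / fact k * f k))"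
proof (rule summable_comparison_test)
  show "summable (\<lambda>k. inverse (fact k) * (\<bar>x\<bar> * B) ^ k)" by (rule summable_exp)
  have "norm (norm (x ^ k / fact k * f k)) \<le> inverse (fact k) * (\<bar>x\<bar> * B) ^ k" for k
  proof -
    have "norm (norm (x ^ k / fact k * f k)) = inverse (fact k) * (\<bar>x\<bar> ^ k * \<bar>f k\<bar>)"
      by (simp add: abs_mult power_abs divide_inverse)
    also have "\<dots> \<le> inverse (fact k) * (\<bar>x\<bar> ^ k * B ^ k)"
      using assms by (intro mult_left_mono) auto
    finally show ?thesis by (simp add: power_mult_distrib)
  qed
  then show "\<exists>N. \<forall>k\<ge>N. norm (norm (x ^ k / fact k * f k)) \<le> inverse (fact k) * (\<bar>x\<bar> * B) ^ k"
    by blast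
qed

lemma summable_norm_mat_exp_series:
  assumes "finite S" "y \<in> S"
  shows "summable (\<lambda>n. norm (t ^ n / fact n * mat_pow S G n x y))"
  by (rule summable_norm_exp_series_mult[OF abs_mat_pow_le[OF assms]])

text \<open>\<open>exp (t G) = exp (- s t) exp (s t M)\<close>, via the Cauchy product of the two exponential
  series.\<close>
lemma mat_exp_series_uniformization:
  assumes fin: "finite S" and y: "y \<in> S" and s: "s \<noteq> 0"
  shows "(\<lambda>k. exp (- s * t) * ((s * t) ^ k / fact k * mat_pow S (uniformization G s) k x y))
           sums (\<Sum>n. t ^ n / fact n * mat_pow S G n x y)"
proof -
  define a where "a k = (s * t) ^ k / fact k * mat_pow S (uniformization G s) k x y" for k
  define b where "b k = (- s * t) ^ k / fact k" for k
  have a: "summable (\<lambda>k. norm (a k))"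
    unfolding a_def by (rule summable_norm_mat_exp_series[OF fin y])
  have b: "summable (\<lambda>k. norm (b k))"
    unfolding b_def using summable_norm_exp_series_mult[of "\<lambda>_. 1" 1 "- s * t"] by simp
  have "b sums exp (- s * t)"
    unfolding b_def using exp_converges[of "- s * t"] by (simp add: divide_inverse mult.commute)
  then have suminf_b: "(\<Sum>k. b k) = exp (- s * t)" by (rule sums_unique[symmetric])
  have cauchy: "(\<Sum>i\<le>n. a i * b (n - i)) = t ^ n / fact n * mat_pow S G n x y" for n
  proof -
    have "t ^ n / fact n * mat_pow S G n x y
        = (\<Sum>k\<le>n. t ^ n / fact n * (real (n choose k) * (-s) ^ (n - k) *
             (s ^ k * mat_pow S (uniformization G s) k x y)))"
      unfolding mat_pow_uniformization[OF fin y s, of G n x] by (simp add: sum_distrib_left)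
    also have "\<dots> = (\<Sum>k\<le>n. a k * b (n - k))"
    proof (rule sum.cong)
      fix k assume "k \<in> {..n}"
      then have "t ^ n = t ^ k * t ^ (n - k)" by (simp add: power_add[symmetric])
      moreover have "(- (s * t)) ^ (n - k) = (- s) ^ (n - k) * t ^ (n - k)"
        by (simp add: power_mult_distrib[symmetric])
      ultimately show "t ^ n / fact n * (real (n choose k) * (-s) ^ (n - k) *
          (s ^ k * mat_pow S (uniformization G s) k x y)) = a k * b (n - k)"
        using \<open>k \<in> {..n}\<close> by (simp add: a_def b_def binomial_fact power_mult_distrib field_simps)
    qed simp
    finally show ?thesis by simp
  qed
  have "(\<lambda>n. \<Sum>i\<le>n. a i * b (n - i)) sums ((\<Sum>k. a k) * (\<Sum>k. b k))"
    by (rule Cauchy_product_sums[OF a b])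
  then have "(\<Sum>n. t ^ n / fact n * mat_pow S G n x y) = exp (- s * t) * (\<Sum>k. a k)"
    unfolding cauchy suminf_b by (simp add: sums_unique[symmetric] mult.commute)
  moreover have "(\<lambda>k. exp (- s * t) * a k) sums (exp (- s * t) * (\<Sum>k. a k))"
    by (intro sums_mult summable_sums summable_norm_cancel[OF a])
  ultimately show ?thesis unfolding a_def by simp
qed

lemma mat_pow_row_sum:
  assumes "finite S" "x \<in> S" "\<And>z. z \<in> S \<Longrightarrow> (\<Sum>y\<in>S. G z y) = 0"
  shows "(\<Sum>y\<in>S. mat_pow S G n x y) = (if n = 0 then 1 else 0)"
proof (cases n)
  case 0
  then show ?thesis using assms by simp
next
  case (Suc m)
  have "(\<Sum>y\<in>S. mat_pow S G (Suc m) x y) = (\<Sum>z\<in>S. \<Sum>y\<in>S. mat_pow S G m x z * G z y)"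
    unfolding mat_pow.simps by (rule sum.swap)
  also have "\<dots> = (\<Sum>z\<in>S. mat_pow S G m x z * (\<Sum>y\<in>S. G z y))"
    by (simp add: sum_distrib_left)
  finally show ?thesis using Suc assms(3) by simp
qed

lemma mat_exp_series_row_sum:
  assumes fin: "finite S" and x: "x \<in> S" and G: "\<And>z. z \<in> S \<Longrightarrow> (\<Sum>y\<in>S. G z y) = 0"
  shows "(\<Sum>y\<in>S. \<Sum>n. t ^ n / fact n * mat_pow S G n x y) = 1"
proof -
  have "(\<Sum>y\<in>S. \<Sum>n. t ^ n / fact n * mat_pow S G n x y)
      = (\<Sum>n. t ^ n / fact n * (\<Sum>y\<in>S. mat_pow S G n x y))"
    unfolding sum_distrib_left
    by (rule suminf_sum[symmetric]) (rule summable_norm_cancel[OF summable_norm_mat_exp_series[OF fin]])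
  also have "\<dots> = (\<Sum>n. if n = 0 then 1 else 0)"
    by (simp add: mat_pow_row_sum[OF fin x G] if_distrib cong: if_cong)
  also have "\<dots> = 1"
    using sums_single[of 0 "\<lambda>_. 1::real"] sums_unique by fastforce
  finally show ?thesis .
qed

section \<open>Weights of the uniformized walk\<close>

definition binomial_weight :: "real \<Rightarrow> nat \<Rightarrow> nat \<Rightarrow> real" where
  "binomial_weight c n d = real (n choose d) * c ^ d * (1 - c) ^ (n - d)"

lemma binomial_weight_Suc_Suc:
  "binomial_weight c (Suc n) (Suc d) = (1 - c) * binomial_weight c n (Suc d) + c * binomial_weight c n d"
proof -
  consider "d < n" | "d = n" | "n < d" by linarith
  then show ?thesis
  proof cases
    case 1
    then have "n - d = Suc (n - Suc d)" by simp
    then show ?thesis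
      unfolding binomial_weight_def binomial_Suc_Suc of_nat_add diff_Suc_Suc
      by (simp add: algebra_simps)
  qed (simp_all add: binomial_weight_def binomial_eq_0)
qed

lemma binomial_weight_Suc_0: "binomial_weight c (Suc n) 0 = (1 - c) * binomial_weight c n 0"
  by (simp add: binomial_weight_def)

lemma binomial_weight_0_Suc: "binomial_weight c 0 (Suc d) = 0"
  by (simp add: binomial_weight_def)

definition negbinomial_weight :: "nat \<Rightarrow> real \<Rightarrow> real \<Rightarrow> nat \<Rightarrow> real" where
  "negbinomial_weight Q a b l = real ((l - 1) choose (Q - 1)) * b ^ Q * a ^ (l - Q)"

text \<open>Probability that the walk started at \<open>(j + x, Q)\<close> is at \<open>(j, 0)\<close> after \<open>k\<close> steps: product 2
  runs out at step \<open>l\<close>, and afterwards the remaining \<open>x + Q - l\<close> units of product 1 are removed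
  by axis moves of probability \<open>c\<close>.\<close>
definition axis_weight :: "nat \<Rightarrow> real \<Rightarrow> real \<Rightarrow> real \<Rightarrow> nat \<Rightarrow> nat \<Rightarrow> real" where
  "axis_weight Q a b c k x =
     (\<Sum>l = Q..x + Q. if l \<le> k then negbinomial_weight Q a b l * binomial_weight c (k - l) (x + Q - l) else 0)"

lemma axis_weight_Suc:
  "axis_weight Q a b c (Suc k) x =
     (1 - c) * axis_weight Q a b c k x + (if 0 < x then c * axis_weight Q a b c k (x - 1) else 0)
     + (if Suc k = x + Q then negbinomial_weight Q a b (x + Q) else 0)"
proof -
  define T where "T k x l = (if l \<le> k then negbinomial_weight Q a b l * binomial_weight c (k - l) (x + Q - l) else 0)"
    for k x l
  have split: "axis_weight Q a b c k' x = (\<Sum>l\<in>{Q..<x + Q}. T k' x l) + T k' x (x + Q)" for k'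
  proof -
    have "{Q..x + Q} = insert (x + Q) {Q..<x + Q}" by auto
    then show ?thesis by (simp add: axis_weight_def T_def add.commute)
  qed
  have left: "(if 0 < x then c * axis_weight Q a b c k (x - 1) else 0) = (\<Sum>l\<in>{Q..<x + Q}. c * T k (x - 1) l)"
  proof (cases "x = 0")
    case False
    then have "{Q..x - 1 + Q} = {Q..<x + Q}" by auto
    with False show ?thesis by (simp add: axis_weight_def T_def sum_distrib_left)
  qed simp
  have inner: "T (Suc k) x l = (1 - c) * T k x l + c * T k (x - 1) l" if "l \<in> {Q..<x + Q}" for l
  proof -
    from that have e: "x + Q - l = Suc (x - 1 + Q - l)" by auto
    consider "l \<le> k" | "l = Suc k" | "Suc k < l" by linarith
    then show ?thesis
    proof cases
      case 1
      then have "Suc k - l = Suc (k - l)" by simp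
      with 1 show ?thesis unfolding T_def e by (simp add: binomial_weight_Suc_Suc algebra_simps)
    next
      case 2
      then show ?thesis unfolding T_def e by (simp add: binomial_weight_0_Suc)
    qed (simp add: T_def)
  qed
  have last: "T (Suc k) x (x + Q) = (1 - c) * T k x (x + Q) + (if Suc k = x + Q then negbinomial_weight Q a b (x + Q) else 0)"
  proof -
    consider "x + Q \<le> k" | "x + Q = Suc k" | "Suc k < x + Q" by linarith
    then show ?thesis
    proof cases
      case 1
      then have "Suc k - (x + Q) = Suc (k - (x + Q))" by simp
      with 1 show ?thesis unfolding T_def by (simp add: binomial_weight_Suc_0)
    qed (simp_all add: T_def binomial_weight_def)
  qed
  have "(\<Sum>l\<in>{Q..<x + Q}. T (Suc k) x l)
      = (1 - c) * (\<Sum>l\<in>{Q..<x + Q}. T k x l) + (\<Sum>l\<in>{Q..<x + Q}. c * T k (x - 1) l)"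
    by (simp only: sum.cong[OF refl inner] sum.distrib sum_distrib_left)
  then show ?thesis
    unfolding split left last by (simp add: algebra_simps)
qed

lemma axis_weight_eq_0:
  assumes "k < x + Q"
  shows "axis_weight Q a b c k x = 0"
  using assms by (auto simp: axis_weight_def binomial_weight_def binomial_eq_0 intro!: sum.neutral)

lemma axis_weight_eq:
  assumes "x + Q \<le> k"
  shows "axis_weight Q a b c k x = (\<Sum>l = Q..x + Q. real ((l - 1) choose (Q - 1)) * b ^ Q * a ^ (l - Q)
       * real ((k - l) choose (x + Q - l)) * c ^ (x + Q - l) * (1 - c) ^ (k - (x + Q)))"
  unfolding axis_weight_def
proof (rule sum.cong[OF refl])
  fix l assume l: "l \<in> {Q..x + Q}"
  then have "k - l - (x + Q - l) = k - (x + Q)" using assms by auto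
  with l assms show "(if l \<le> k then negbinomial_weight Q a b l * binomial_weight c (k - l) (x + Q - l) else 0)
    = real ((l - 1) choose (Q - 1)) * b ^ Q * a ^ (l - Q)
       * real ((k - l) choose (x + Q - l)) * c ^ (x + Q - l) * (1 - c) ^ (k - (x + Q))"
    by (simp add: negbinomial_weight_def binomial_weight_def algebra_simps)
qed

definition interior_weight :: "real \<Rightarrow> real \<Rightarrow> nat \<Rightarrow> nat \<Rightarrow> nat \<Rightarrow> real" where
  "interior_weight a b k x y = (if k = x + y then real (k choose x) * a ^ x * b ^ y else 0)"

lemma interior_weight_Suc:
  "interior_weight a b (Suc k) x y =
     (if 0 < x then a * interior_weight a b k (x - 1) y else 0)
     + (if 0 < y then b * interior_weight a b k x (y - 1) else 0)"
  by (cases x; cases y) (auto simp: interior_weight_def algebra_simps)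

section \<open>The inventory chain\<close>

lemma mem_inv_states [simp]: "(a, b) \<in> inv_states Q1 Q2 \<longleftrightarrow> a \<le> Q1 \<and> b \<le> Q2"
  by (simp add: inv_states_def)

lemma finite_inv_states [simp]: "finite (inv_states Q1 Q2)"
  by (simp add: inv_states_def)

lemma inv_gen_pow_eq_mat_pow:
  "inv_gen_pow Q1 Q2 l1 l2 p12 p21 n x y =
     mat_pow (inv_states Q1 Q2) (inv_gen Q1 Q2 l1 l2 p12 p21) n x y"
  by (induction n arbitrary: y) auto

lemma inv_rate_from_interior:
  "1 \<le> i1 \<Longrightarrow> 1 \<le> i2 \<Longrightarrow> inv_rate l1 l2 p12 p21 (i1, i2) w =
     (if w = (i1 - 1, i2) then l1 else 0) + (if w = (i1, i2 - 1) then l2 else 0)"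
  by (auto simp: inv_rate_def Let_def)

lemma inv_rate_from_axis:
  "1 \<le> i1 \<Longrightarrow> inv_rate l1 l2 p12 p21 (i1, 0) w = (if w = (i1 - 1, 0) then l1 + l2 * p21 else 0)"
  by (auto simp: inv_rate_def Let_def)

lemma inv_rate_into_interior:
  "1 \<le> j1 \<Longrightarrow> 1 \<le> j2 \<Longrightarrow> inv_rate l1 l2 p12 p21 z (j1, j2) =
     (if z = (Suc j1, j2) then l1 else 0) + (if z = (j1, Suc j2) then l2 else 0)"
  by (cases z) (auto simp: inv_rate_def Let_def)

lemma inv_rate_into_axis:
  "1 \<le> j1 \<Longrightarrow> inv_rate l1 l2 p12 p21 z (j1, 0) =
     (if z = (j1, 1) then l2 else 0) + (if z = (Suc j1, 0) then l1 + l2 * p21 else 0)"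
  by (cases z) (auto simp: inv_rate_def Let_def)

lemma inv_rate_swap:
  "inv_rate l1 l2 p12 p21 x y = inv_rate l2 l1 p21 p12 (prod.swap x) (prod.swap y)"
proof (cases x; cases y)
  fix a b c d assume "x = (a, b)" "y = (c, d)"
  then show ?thesis by (cases "a = 0"; cases "b = 0") (auto simp: inv_rate_def Let_def)
qed

lemma inv_states_swap: "inv_states Q2 Q1 = prod.swap ` inv_states Q1 Q2"
  by (simp add: inv_states_def product_swap)

lemma sum_inv_states_remove_swap:
  "(\<Sum>z\<in>inv_states Q1 Q2 - {x}. f z) = (\<Sum>z\<in>inv_states Q2 Q1 - {prod.swap x}. f (prod.swap z))"
proof -
  have "inv_states Q1 Q2 - {x} = prod.swap ` (inv_states Q2 Q1 - {prod.swap x})"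
    by (cases x) (auto simp: inv_states_def)
  then show ?thesis by (simp add: sum.reindex)
qed

lemma inv_gen_swap:
  "inv_gen Q1 Q2 l1 l2 p12 p21 x y = inv_gen Q2 Q1 l2 l1 p21 p12 (prod.swap x) (prod.swap y)"
  by (simp add: inv_gen_def sum_inv_states_remove_swap[of _ Q1 Q2 x] inv_rate_swap[of l1 l2 p12 p21]
      prod_eq_iff)

lemma inv_gen_pow_swap:
  "inv_gen_pow Q1 Q2 l1 l2 p12 p21 n x y = inv_gen_pow Q2 Q1 l2 l1 p21 p12 n (prod.swap x) (prod.swap y)"
proof (induction n arbitrary: y)
  case (Suc n)
  then show ?case
    by (simp add: inv_states_swap[of Q1 Q2] sum.reindex inv_gen_swap[of Q1 Q2 l1 l2 p12 p21])
qed (simp add: prod_eq_iff)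

lemma inv_trans_swap:
  "inv_trans Q1 Q2 l1 l2 p12 p21 t x y = inv_trans Q2 Q1 l2 l1 p21 p12 t (prod.swap x) (prod.swap y)"
  by (simp add: inv_trans_def inv_gen_pow_swap[of Q1 Q2 l1 l2 p12 p21])

lemma inv_gen_row_sum:
  assumes "x \<in> inv_states Q1 Q2"
  shows "(\<Sum>y\<in>inv_states Q1 Q2. inv_gen Q1 Q2 l1 l2 p12 p21 x y) = 0"
proof -
  have "(\<Sum>y\<in>inv_states Q1 Q2 - {x}. inv_gen Q1 Q2 l1 l2 p12 p21 x y)
      = (\<Sum>y\<in>inv_states Q1 Q2 - {x}. inv_rate l1 l2 p12 p21 x y)"
    by (rule sum.cong) (auto simp: inv_gen_def)
  with assms show ?thesis by (simp add: sum.remove inv_gen_def)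
qed

lemma inv_gen_diag_interior:
  assumes "1 \<le> j1" "j1 \<le> Q1" "1 \<le> j2" "j2 \<le> Q2"
  shows "inv_gen Q1 Q2 l1 l2 p12 p21 (j1, j2) (j1, j2) = - (l1 + l2)"
  using assms by (auto simp: inv_gen_def inv_rate_from_interior sum.distrib)

lemma inv_gen_diag_axis:
  assumes "1 \<le> j1" "j1 \<le> Q1"
  shows "inv_gen Q1 Q2 l1 l2 p12 p21 (j1, 0) (j1, 0) = - (l1 + l2 * p21)"
  using assms by (auto simp: inv_gen_def inv_rate_from_axis)

lemma sum_mult_delta:
  fixes f :: "'a \<Rightarrow> 'b::semiring_0"
  assumes "finite A"
  shows "(\<Sum>z\<in>A. f z * (if z = p then c else 0)) = (if p \<in> A then f p * c else 0)"
  using assms by (simp add: if_distrib[of "times _"] cong: if_cong)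

context
  fixes Q1 Q2 :: nat and l1 l2 p12 p21 :: real
  assumes l1: "0 < l1" and l2: "0 < l2"
begin

abbreviation inv_jump :: "nat \<Rightarrow> nat \<times> nat \<Rightarrow> real" where
  "inv_jump k y \<equiv>
     mat_pow (inv_states Q1 Q2) (uniformization (inv_gen Q1 Q2 l1 l2 p12 p21) (l1 + l2)) k (Q1, Q2) y"

lemma uniformization_inv_gen_into_interior:
  assumes "1 \<le> j1" "j1 \<le> Q1" "1 \<le> j2" "j2 \<le> Q2"
  shows "uniformization (inv_gen Q1 Q2 l1 l2 p12 p21) (l1 + l2) z (j1, j2) =
     (if z = (Suc j1, j2) then l1 / (l1 + l2) else 0) + (if z = (j1, Suc j2) then l2 / (l1 + l2) else 0)"
proof (cases "z = (j1, j2)")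
  case True
  with assms l1 l2 show ?thesis
    by (simp add: uniformization_def inv_gen_diag_interior field_simps)
next
  case False
  with assms show ?thesis
    by (simp add: uniformization_def inv_gen_def inv_rate_into_interior add_divide_distrib)
qed

lemma uniformization_inv_gen_into_axis:
  assumes "1 \<le> j1" "j1 \<le> Q1"
  shows "uniformization (inv_gen Q1 Q2 l1 l2 p12 p21) (l1 + l2) z (j1, 0) =
     (if z = (j1, 0) then 1 - (l1 + l2 * p21) / (l1 + l2) else 0)
     + (if z = (j1, 1) then l2 / (l1 + l2) else 0)
     + (if z = (Suc j1, 0) then (l1 + l2 * p21) / (l1 + l2) else 0)"
proof (cases "z = (j1, 0)")
  case True
  with assms l1 l2 show ?thesis
    by (simp add: uniformization_def inv_gen_diag_axis field_simps)
next
  case False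
  with assms show ?thesis
    by (simp add: uniformization_def inv_gen_def inv_rate_into_axis add_divide_distrib)
qed

lemma inv_jump_interior:
  assumes "1 \<le> j1" "j1 \<le> Q1" "1 \<le> j2" "j2 \<le> Q2"
  shows "inv_jump k (j1, j2) = interior_weight (l1 / (l1 + l2)) (l2 / (l1 + l2)) k (Q1 - j1) (Q2 - j2)"
  using assms
proof (induction k arbitrary: j1 j2)
  case 0
  then show ?case by (auto simp: interior_weight_def)
next
  case (Suc k)
  have "inv_jump (Suc k) (j1, j2)
      = (if j1 < Q1 then inv_jump k (Suc j1, j2) * (l1 / (l1 + l2)) else 0)
        + (if j2 < Q2 then inv_jump k (j1, Suc j2) * (l2 / (l1 + l2)) else 0)"
    using Suc.prems
    by (simp add: uniformization_inv_gen_into_interior distrib_left sum.distrib sum_mult_delta)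
  also have "\<dots> = interior_weight (l1 / (l1 + l2)) (l2 / (l1 + l2)) (Suc k) (Q1 - j1) (Q2 - j2)"
    using Suc.prems Suc.IH[of "Suc j1" j2] Suc.IH[of j1 "Suc j2"]
    by (auto simp: interior_weight_Suc Suc_diff_Suc algebra_simps)
  finally show ?case .
qed

text \<open>The chain enters \<open>(j1, 0)\<close> along the axis or from \<open>(j1, 1)\<close>; from \<open>(Q1, Q2)\<close> the
  state \<open>(j1, 1)\<close> is reachable only in exactly \<open>Q1 - j1 + Q2 - 1\<close> steps, which produces the
  negative binomial term in the recursion for \<open>axis_weight\<close>.\<close>
lemma inv_jump_axis:
  assumes Q2: "1 \<le> Q2" and "1 \<le> j1" "j1 \<le> Q1"
  shows "inv_jump k (j1, 0) =
    axis_weight Q2 (l1 / (l1 + l2)) (l2 / (l1 + l2)) ((l1 + l2 * p21) / (l1 + l2)) k (Q1 - j1)"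
  using assms(2,3)
proof (induction k arbitrary: j1)
  case 0
  with Q2 show ?case by (simp add: axis_weight_eq_0)
next
  case (Suc k)
  define a b c where "a = l1 / (l1 + l2)" and "b = l2 / (l1 + l2)" and "c = (l1 + l2 * p21) / (l1 + l2)"
  define x where "x = Q1 - j1"
  have "inv_jump (Suc k) (j1, 0)
      = inv_jump k (j1, 0) * (1 - c) + inv_jump k (j1, 1) * b
        + (if j1 < Q1 then inv_jump k (Suc j1, 0) * c else 0)"
    using Suc.prems Q2
    by (simp add: uniformization_inv_gen_into_axis distrib_left sum.distrib sum_mult_delta a_def b_def c_def)
  also have "\<dots> = (1 - c) * axis_weight Q2 a b c k x
      + (if 0 < x then c * axis_weight Q2 a b c k (x - 1) else 0)
      + b * interior_weight a b k x (Q2 - 1)"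
    using Suc.prems Suc.IH[of "Suc j1"] Suc.IH[of j1] inv_jump_interior[of j1 1 k] Q2
    by (auto simp: Suc_diff_Suc a_def b_def c_def x_def algebra_simps)
  also have "b * interior_weight a b k x (Q2 - 1) =
      (if Suc k = x + Q2 then negbinomial_weight Q2 a b (x + Q2) else 0)"
  proof -
    obtain q where q: "Q2 = Suc q" using Q2 by (cases Q2) auto
    have "(x + q) choose x = (x + q) choose q" using binomial_symmetric[of x "x + q"] by simp
    then show ?thesis unfolding interior_weight_def negbinomial_weight_def q by (auto simp: algebra_simps)
  qed
  finally show ?case by (simp add: axis_weight_Suc a_def b_def c_def x_def)
qed

lemma inv_trans_sums_inv_jump:
  assumes "y \<in> inv_states Q1 Q2"
  shows "(\<lambda>k. exp (- (l1 + l2) * t) * (((l1 + l2) * t) ^ k / fact k * inv_jump k y))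
           sums inv_trans Q1 Q2 l1 l2 p12 p21 t (Q1, Q2) y"
  unfolding inv_trans_def inv_gen_pow_eq_mat_pow
  using assms l1 l2 by (intro mat_exp_series_uniformization) auto

lemma inv_trans_interior:
  assumes j: "1 \<le> j1" "j1 \<le> Q1" "1 \<le> j2" "j2 \<le> Q2" and s: "s = l1 + l2"
  shows "inv_trans Q1 Q2 l1 l2 p12 p21 t (Q1, Q2) (j1, j2) =
    exp (- s * t) * (s * t) ^ (Q1 + Q2 - j1 - j2) / fact (Q1 + Q2 - j1 - j2)
    * real ((Q1 + Q2 - j1 - j2) choose (Q1 - j1)) * (l1 / s) ^ (Q1 - j1) * (l2 / s) ^ (Q2 - j2)"
proof -
  define N where "N = Q1 + Q2 - j1 - j2"
  define c where "c = exp (- s * t) * ((s * t) ^ N / fact N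
      * (real (N choose (Q1 - j1)) * (l1 / s) ^ (Q1 - j1) * (l2 / s) ^ (Q2 - j2)))"
  have "N = (Q1 - j1) + (Q2 - j2)" using j by (simp add: N_def)
  then have single: "(\<lambda>k. exp (- s * t) * ((s * t) ^ k / fact k * inv_jump k (j1, j2)))
      = (\<lambda>k. if k = N then c else 0)"
    using j by (auto simp: inv_jump_interior interior_weight_def s c_def)
  have "(\<lambda>k. exp (- s * t) * ((s * t) ^ k / fact k * inv_jump k (j1, j2))) sums c"
    unfolding single by (rule sums_single)
  moreover have "(\<lambda>k. exp (- s * t) * ((s * t) ^ k / fact k * inv_jump k (j1, j2)))
      sums inv_trans Q1 Q2 l1 l2 p12 p21 t (Q1, Q2) (j1, j2)"
    unfolding s using inv_trans_sums_inv_jump j by simp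
  ultimately have "c = inv_trans Q1 Q2 l1 l2 p12 p21 t (Q1, Q2) (j1, j2)"
    by (rule sums_unique2)
  then show ?thesis by (simp add: c_def N_def)
qed

lemma inv_trans_axis:
  assumes Q2: "1 \<le> Q2" and j: "1 \<le> j1" "j1 \<le> Q1"
    and s: "s = l1 + l2" and s1: "s1 = l1 + l2 * p21" and m: "m = Q1 + Q2 - j1"
  shows "(\<lambda>i. let k = i + m in
      exp (- s * t) * (s * t) ^ k / fact k *
      (\<Sum>l = Q2..m. real ((l - 1) choose (Q2 - 1)) * (l2 / s) ^ Q2 * (l1 / s) ^ (l - Q2)
         * real ((k - l) choose (m - l)) * (s1 / s) ^ (m - l) * ((s - s1) / s) ^ (k - m)))
    sums inv_trans Q1 Q2 l1 l2 p12 p21 t (Q1, Q2) (j1, 0)"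
proof -
  have m': "m = (Q1 - j1) + Q2" using j m by simp
  have jump: "inv_jump k (j1, 0) = axis_weight Q2 (l1 / s) (l2 / s) (s1 / s) k (Q1 - j1)" for k
    unfolding s s1 using inv_jump_axis[OF Q2 j] .
  define f where "f k = exp (- s * t) * ((s * t) ^ k / fact k * inv_jump k (j1, 0))" for k
  have "(\<Sum>k<m. f k) = 0"
    by (rule sum.neutral) (auto simp: f_def jump m' axis_weight_eq_0)
  moreover have "f sums inv_trans Q1 Q2 l1 l2 p12 p21 t (Q1, Q2) (j1, 0)"
    unfolding f_def s using inv_trans_sums_inv_jump j by simp
  ultimately have "(\<lambda>i. f (i + m)) sums inv_trans Q1 Q2 l1 l2 p12 p21 t (Q1, Q2) (j1, 0)"
    by (simp add: sums_iff_shift)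
  moreover have "(s - s1) / s = 1 - s1 / s"
    using l1 l2 s by (simp add: field_simps)
  ultimately show ?thesis
    by (simp add: f_def jump Let_def m' axis_weight_eq mult.assoc)
qed

end

lemma inv_trans_row_sum:
  assumes "x \<in> inv_states Q1 Q2"
  shows "(\<Sum>y\<in>inv_states Q1 Q2. inv_trans Q1 Q2 l1 l2 p12 p21 t x y) = 1"
  unfolding inv_trans_def inv_gen_pow_eq_mat_pow
  using assms inv_gen_row_sum by (intro mat_exp_series_row_sum) auto

theorem theorem1:
  fixes Q1 Q2 :: nat and l1 l2 p12 p21 t :: real
  assumes "1 \<le> Q1" "1 \<le> Q2" "0 < l1" "0 < l2"
    and "0 \<le> p12" "p12 \<le> 1" "0 \<le> p21" "p21 \<le> 1" "0 \<le> t"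
  defines "s \<equiv> l1 + l2" and "s1 \<equiv> l1 + l2 * p21" and "s2 \<equiv> l2 + l1 * p12"
    and "p \<equiv> (\<lambda>j. inv_trans Q1 Q2 l1 l2 p12 p21 t (Q1, Q2) j)"
  shows
    "(\<forall>j1 j2. 1 \<le> j1 \<and> j1 \<le> Q1 \<and> 1 \<le> j2 \<and> j2 \<le> Q2 \<longrightarrow>
        p (j1, j2) =
          exp (- s * t) * (s * t) ^ (Q1 + Q2 - j1 - j2) / fact (Q1 + Q2 - j1 - j2)
          * real ((Q1 + Q2 - j1 - j2) choose (Q1 - j1))
          * (l1 / s) ^ (Q1 - j1) * (l2 / s) ^ (Q2 - j2))
   \<and> (\<forall>j1. 1 \<le> j1 \<and> j1 \<le> Q1 \<longrightarrow>
        (\<lambda>i. let k = i + (Q1 + Q2 - j1) in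
           exp (- s * t) * (s * t) ^ k / fact k *
           (\<Sum>l = Q2..Q1 + Q2 - j1.
              real ((l - 1) choose (Q2 - 1)) * (l2 / s) ^ Q2 * (l1 / s) ^ (l - Q2)
              * real ((k - l) choose (Q1 + Q2 - j1 - l))
              * (s1 / s) ^ (Q1 + Q2 - j1 - l) * ((s - s1) / s) ^ (k - (Q1 + Q2 - j1))))
        sums p (j1, 0))
   \<and> (\<forall>j2. 1 \<le> j2 \<and> j2 \<le> Q2 \<longrightarrow>
        (\<lambda>i. let k = i + (Q1 + Q2 - j2) in
           exp (- s * t) * (s * t) ^ k / fact k *
           (\<Sum>l = Q1..Q1 + Q2 - j2.
              real ((l - 1) choose (Q1 - 1)) * (l1 / s) ^ Q1 * (l2 / s) ^ (l - Q1)
              * real ((k - l) choose (Q1 + Q2 - j2 - l))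
              * (s2 / s) ^ (Q1 + Q2 - j2 - l) * ((s - s2) / s) ^ (k - (Q1 + Q2 - j2))))
        sums p (0, j2))
   \<and> p (0, 0) = 1 - (\<Sum>j\<in>inv_states Q1 Q2 - {(0, 0)}. p j)"
proof -
  have s: "s = l1 + l2" and s': "s = l2 + l1" and s1: "s1 = l1 + l2 * p21" and s2: "s2 = l2 + l1 * p12"
    and m: "Q1 + Q2 - j = Q2 + Q1 - j" for j
    by (simp_all add: s_def s1_def s2_def)
  have swap: "p (0, j) = inv_trans Q2 Q1 l2 l1 p21 p12 t (Q2, Q1) (j, 0)" for j
    unfolding p_def by (simp add: inv_trans_swap[of Q1 Q2 l1 l2 p12 p21])
  have "(\<Sum>j\<in>inv_states Q1 Q2. p j) = 1"
    unfolding p_def by (rule inv_trans_row_sum) simp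
  then have "p (0, 0) = 1 - (\<Sum>j\<in>inv_states Q1 Q2 - {(0, 0)}. p j)"
    using sum.remove[of "inv_states Q1 Q2" "(0, 0)" p] by simp
  moreover note inv_trans_interior[OF assms(3,4) _ _ _ _ s]
    and inv_trans_axis[OF assms(3,4,2) _ _ s s1 refl]
    and inv_trans_axis[OF assms(4,3,1) _ _ s' s2 m]
  ultimately show ?thesis
    unfolding swap unfolding p_def by blast
qed

end
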